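(* Let $q\in L^1(\Omega;\mathbb{R}^n)$ with $q\not\equiv0$. Then the problem $\min_{\kappa_0\in\mathbb{A}^0}I_{\mathrm{loc}}(\kappa_0;q)$ admits an optimal solution given pointwise by $\hat\kappa_0(x)=\hat c_0|q(x)|$, where $\hat c_0=|\Omega|/\|q\|_{L^1(\Omega;\mathbb{R}^n)}$.
   Context: $\Omega\subset\mathbb{R}^n$ is a bounded open set. $\mathbb{A}^0=\{\kappa_0\in L^1(\Omega):\kappa_0\ge0\text{ a.e. in }\Omega,\ \int_\Omega\kappa_0\,dx\le|\Omega|\}$. $I_{\mathrm{loc}}(\kappa;q)=\frac12\int_\Omega\kappa^{-1}(x)|q(x)|^2dx$, with the convention that $\kappa^{-1}|q|^2=0$ where $\kappa=0$ and $q=0$, and $=+\infty$ where $\kappa=0$ and $q\ne0$. $|\cdot|$ denotes the Euclidean norm. *)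

theory Defs
  imports "HOL-Analysis.Analysis"
begin

definition A0 :: "('n::euclidean_space) set \<Rightarrow> ('n \<Rightarrow> real) set" where
  "A0 \<Omega> = {\<kappa>. integrable (lebesgue_on \<Omega>) \<kappa>
              \<and> (AE x in lebesgue_on \<Omega>. \<kappa> x \<ge> 0)
              \<and> integral\<^sup>L (lebesgue_on \<Omega>) \<kappa> \<le> measure lebesgue \<Omega>}"

definition loc_integrand :: "real \<Rightarrow> 'v::real_normed_vector \<Rightarrow> ennreal" where
  "loc_integrand k v =
     (if k = 0 then (if v = 0 then 0 else \<infinity>) else ennreal ((norm v)\<^sup>2 / k))"

definition I_loc :: "('n::euclidean_space) set \<Rightarrow> ('n \<Rightarrow> real) \<Rightarrow> ('n \<Rightarrow> 'v::real_normed_vector) \<Rightarrow> ennreal" where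
  "I_loc \<Omega> \<kappa> q = (1/2) * (\<integral>\<^sup>+ x. loc_integrand (\<kappa> x) (q x) \<partial>(lebesgue_on \<Omega>))"

end

theory Submission
  imports Defs
begin

text \<open>For \<open>c > 0\<close> the tangent-line (AM-GM) bound
  \<open>|v|\<^sup>2 / k \<ge> 2 |v| / c - k / c\<^sup>2\<close> holds for every \<open>k \<ge> 0\<close>, with equality at
  \<open>k = c |v|\<close>. Integrating it against an admissible \<open>\<kappa>\<close> and using the budget
  \<open>\<integral> \<kappa> \<le> |\<Omega>|\<close> gives \<open>2 I(\<kappa>) \<ge> 2 \<parallel>q\<parallel>\<^sub>1 / c - |\<Omega>| / c\<^sup>2\<close>; the choice
  \<open>c = |\<Omega>| / \<parallel>q\<parallel>\<^sub>1\<close> makes the right-hand side equal to \<open>\<parallel>q\<parallel>\<^sub>1 / c = 2 I(c |q|)\<close>,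
  and \<open>c |q|\<close> exhausts the budget exactly.\<close>

lemma borel_measurable_loc_integrand [measurable]:
  fixes k :: "'a \<Rightarrow> real" and q :: "'a \<Rightarrow> 'v::euclidean_space"
  assumes "k \<in> borel_measurable M" "q \<in> borel_measurable M"
  shows "(\<lambda>x. loc_integrand (k x) (q x)) \<in> borel_measurable M"
  unfolding loc_integrand_def using assms by measurable

lemma loc_integrand_scaled_norm:
  assumes "c > 0"
  shows "loc_integrand (c * norm v) v = ennreal (norm v / c)"
  using assms by (simp add: loc_integrand_def power2_eq_square)

lemma loc_integrand_tangent_bound:
  fixes v :: "'v::real_normed_vector"
  assumes "k \<ge> 0" "c > 0"
  shows "ennreal (2 * norm v / c) \<le> loc_integrand k v + ennreal (k / c\<^sup>2)"
proof (cases "k = 0")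
  case True
  then show ?thesis by (simp add: loc_integrand_def)
next
  case False
  with assms have "k > 0" by simp
  have "2 * norm v * c * k \<le> (norm v)\<^sup>2 * c\<^sup>2 + k\<^sup>2"
    using sum_squares_bound[of "norm v * c" k] by (simp add: power_mult_distrib mult.assoc)
  then have "2 * norm v / c \<le> (norm v)\<^sup>2 / k + k / c\<^sup>2"
    using \<open>k > 0\<close> \<open>c > 0\<close> by (simp add: field_simps power2_eq_square)
  then show ?thesis
    using \<open>k > 0\<close> \<open>c > 0\<close> by (simp add: loc_integrand_def flip: ennreal_plus)
qed

lemma nn_integral_loc_integrand_scaled_norm:
  fixes q :: "'a \<Rightarrow> 'v::euclidean_space"
  assumes "integrable M q" "c > 0"
  shows "(\<integral>\<^sup>+ x. loc_integrand (c * norm (q x)) (q x) \<partial>M) = ennreal ((\<integral>x. norm (q x) \<partial>M) / c)"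
proof -
  have "(\<integral>\<^sup>+ x. loc_integrand (c * norm (q x)) (q x) \<partial>M) = (\<integral>\<^sup>+ x. ennreal (norm (q x) / c) \<partial>M)"
    using assms(2) by (simp add: loc_integrand_scaled_norm)
  also have "\<dots> = ennreal (\<integral>x. norm (q x) / c \<partial>M)"
    using assms by (intro nn_integral_eq_integral) auto
  finally show ?thesis by simp
qed

lemma nn_integral_loc_integrand_lower_bound:
  fixes q :: "'a \<Rightarrow> 'v::euclidean_space"
  assumes "integrable M q" "integrable M \<kappa>" "AE x in M. \<kappa> x \<ge> 0" "c > 0"
  shows "ennreal (2 * (\<integral>x. norm (q x) \<partial>M) / c)
    \<le> (\<integral>\<^sup>+ x. loc_integrand (\<kappa> x) (q x) \<partial>M) + ennreal ((\<integral>x. \<kappa> x \<partial>M) / c\<^sup>2)"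
proof -
  have "ennreal (2 * (\<integral>x. norm (q x) \<partial>M) / c) = (\<integral>\<^sup>+ x. ennreal (2 * norm (q x) / c) \<partial>M)"
    using assms by (subst nn_integral_eq_integral) auto
  also have "\<dots> \<le> (\<integral>\<^sup>+ x. loc_integrand (\<kappa> x) (q x) + ennreal (\<kappa> x / c\<^sup>2) \<partial>M)"
    using assms(3,4) by (intro nn_integral_mono_AE) (auto elim!: eventually_mono intro: loc_integrand_tangent_bound)
  also have "\<dots> = (\<integral>\<^sup>+ x. loc_integrand (\<kappa> x) (q x) \<partial>M) + (\<integral>\<^sup>+ x. ennreal (\<kappa> x / c\<^sup>2) \<partial>M)"
    using assms(1,2) by (intro nn_integral_add) auto
  also have "(\<integral>\<^sup>+ x. ennreal (\<kappa> x / c\<^sup>2) \<partial>M) = ennreal ((\<integral>x. \<kappa> x \<partial>M) / c\<^sup>2)"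
    using assms(2,3) by (subst nn_integral_eq_integral) (auto elim!: eventually_mono)
  finally show ?thesis .
qed

lemma nn_integral_loc_integrand_minimal:
  fixes q :: "'a \<Rightarrow> 'v::euclidean_space"
  assumes "integrable M q" "integrable M \<kappa>" "AE x in M. \<kappa> x \<ge> 0"
    and "(\<integral>x. \<kappa> x \<partial>M) \<le> m" "m > 0" "(\<integral>x. norm (q x) \<partial>M) > 0"
  defines "c \<equiv> m / (\<integral>x. norm (q x) \<partial>M)"
  shows "(\<integral>\<^sup>+ x. loc_integrand (c * norm (q x)) (q x) \<partial>M) \<le> (\<integral>\<^sup>+ x. loc_integrand (\<kappa> x) (q x) \<partial>M)"
proof -
  define L where "L = (\<integral>x. norm (q x) \<partial>M)"
  define J where "J = (\<integral>\<^sup>+ x. loc_integrand (\<kappa> x) (q x) \<partial>M)"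
  have "c > 0" "L > 0"
    using assms(5,6) unfolding c_def L_def by simp_all
  have budget: "(\<integral>x. \<kappa> x \<partial>M) / c\<^sup>2 \<le> L / c"
  proof -
    have "(\<integral>x. \<kappa> x \<partial>M) / c\<^sup>2 \<le> m / c\<^sup>2"
      using assms(4) \<open>c > 0\<close> by (simp add: divide_right_mono)
    also have "m / c\<^sup>2 = L / c"
      using \<open>L > 0\<close> assms(5) unfolding c_def L_def by (simp add: field_simps power2_eq_square)
    finally show ?thesis .
  qed
  have "ennreal (L / c) + ennreal (L / c) = ennreal (2 * L / c)"
    using \<open>c > 0\<close> \<open>L > 0\<close> by (simp flip: ennreal_plus)
  also have "\<dots> \<le> J + ennreal ((\<integral>x. \<kappa> x \<partial>M) / c\<^sup>2)"
    unfolding L_def J_def using assms(1-3) \<open>c > 0\<close> by (rule nn_integral_loc_integrand_lower_bound)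
  also have "\<dots> \<le> J + ennreal (L / c)"
    using budget by (intro add_left_mono ennreal_leI)
  finally have "ennreal (L / c) \<le> J"
    by (simp add: add.commute ennreal_add_left_cancel_le)
  then show ?thesis
    using nn_integral_loc_integrand_scaled_norm[OF assms(1) \<open>c > 0\<close>] unfolding L_def J_def by simp
qed

lemma integral_norm_pos_if_not_AE_zero:
  fixes q :: "'a \<Rightarrow> 'b::{banach, second_countable_topology}"
  assumes "integrable M q" "\<not> (AE x in M. q x = 0)"
  shows "(\<integral>x. norm (q x) \<partial>M) > 0"
  using assms integral_nonneg_eq_0_iff_AE[OF integrable_norm[OF assms(1)]]
  by (simp add: order_less_le)

lemma lmeasure_pos_if_not_AE:
  assumes "\<Omega> \<in> lmeasurable" "\<not> (AE x in lebesgue_on \<Omega>. P x)"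
  shows "measure lebesgue \<Omega> > 0"
proof (rule ccontr)
  assume "\<not> measure lebesgue \<Omega> > 0"
  then have "emeasure lebesgue \<Omega> = 0"
    using assms(1) measure_nonneg[of lebesgue \<Omega>] by (simp add: emeasure_eq_measure2)
  then have "AE x in lebesgue_on \<Omega>. P x"
    using assms(1) by (intro AE_I[where N = \<Omega>]) (auto simp: emeasure_restrict_space)
  with assms(2) show False ..
qed

theorem proposition2p1:
  fixes \<Omega> :: "(real ^ 'n) set" and q :: "real ^ 'n \<Rightarrow> real ^ 'n"
  assumes "open \<Omega>" and "bounded \<Omega>"
    and "integrable (lebesgue_on \<Omega>) q"
    and "\<not> (AE x in lebesgue_on \<Omega>. q x = 0)"
  defines "c0 \<equiv> measure lebesgue \<Omega> / (\<integral>x. norm (q x) \<partial>(lebesgue_on \<Omega>))"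
  shows "(\<lambda>x. c0 * norm (q x)) \<in> A0 \<Omega>
    \<and> (\<forall>\<kappa>\<in>A0 \<Omega>. I_loc \<Omega> (\<lambda>x. c0 * norm (q x)) q \<le> I_loc \<Omega> \<kappa> q)"
proof -
  have "\<Omega> \<in> lmeasurable"
    using assms(1,2) by (simp add: bounded_set_imp_lmeasurable borel_open)
  have L_pos: "(\<integral>x. norm (q x) \<partial>lebesgue_on \<Omega>) > 0"
    using assms(3,4) by (rule integral_norm_pos_if_not_AE_zero)
  have m_pos: "measure lebesgue \<Omega> > 0"
    using \<open>\<Omega> \<in> lmeasurable\<close> assms(4) by (rule lmeasure_pos_if_not_AE)
  have "(\<lambda>x. c0 * norm (q x)) \<in> A0 \<Omega>"
    using assms(3) L_pos m_pos unfolding A0_def c0_def by simp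
  moreover have "I_loc \<Omega> (\<lambda>x. c0 * norm (q x)) q \<le> I_loc \<Omega> \<kappa> q" if "\<kappa> \<in> A0 \<Omega>" for \<kappa>
    using that assms(3) L_pos m_pos unfolding I_loc_def A0_def c0_def
    by (intro mult_left_mono nn_integral_loc_integrand_minimal) auto
  ultimately show ?thesis by blast
qed

end
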